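(* Let $G$ be a topological group, $\xi=(E\xrightarrow{p}X)$ a numerable principal $G$-bundle over a pointed space $(X,* )$, pointed by $\tilde*\in p^{-1}( * )$, with gauge group $\mathcal G$, and let $\mathrm{res}:\mathcal G\to G$ be the homomorphism defined by $\chi(\tilde* )=\tilde*\cdot\mathrm{res}(\chi)$. If $G$ is SIN, then $\mathrm{res}$ is uniformly continuous. If $G$ is path-connected, then $\mathrm{res}$ is surjective.
   Context: SIN: the identity has a fundamental system of conjugation-invariant neighbourhoods. The gauge group $\mathcal G$ is the group of $G$-equivariant homeomorphisms $\chi:E\to E$ with $p\chi=p$. Let $\gamma:E\times_XE\to G$ be defined by $y=z\cdot\gamma(y,z)$; $\mathcal V_G$ is the set of open symmetric neighbourhoods of the identity in $G$. $\mathcal G$ carries the uniform structure with fundamental entourages $\mathcal O^{\mathcal G}(K,V)=\{(\chi,\tilde\chi):\gamma(\chi(z),\tilde\chi(z))\in V\ \forall z\in p^{-1}(K)\}$, $K\subset X$ compact, $V\in\mathcal V_G$. $G$ carries the uniform structure with entourages $\{(\tilde g,g):\tilde gg^{-1}\in V\}$, $V\in\mathcal V_G$. *)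

theory Defs
  imports "HOL-Analysis.Analysis" "HOL-Algebra.Group"
begin

definition topological_group :: "('g, 'm) monoid_scheme \<Rightarrow> 'g topology \<Rightarrow> bool" where
  "topological_group G TG \<longleftrightarrow>
     group G \<and> topspace TG = carrier G \<and>
     continuous_map (prod_topology TG TG) TG (\<lambda>(a, b). a \<otimes>\<^bsub>G\<^esub> b) \<and>
     continuous_map TG TG (\<lambda>a. inv\<^bsub>G\<^esub> a)"

definition sym_nhds_one :: "('g, 'm) monoid_scheme \<Rightarrow> 'g topology \<Rightarrow> 'g set set" where
  "sym_nhds_one G TG =
     {V. openin TG V \<and> \<one>\<^bsub>G\<^esub> \<in> V \<and> (\<forall>v\<in>V. inv\<^bsub>G\<^esub> v \<in> V)}"

definition SIN :: "('g, 'm) monoid_scheme \<Rightarrow> 'g topology \<Rightarrow> bool" where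
  "SIN G TG \<longleftrightarrow>
     (\<forall>U. openin TG U \<and> \<one>\<^bsub>G\<^esub> \<in> U \<longrightarrow>
        (\<exists>V. V \<subseteq> U \<and> (\<exists>W. openin TG W \<and> \<one>\<^bsub>G\<^esub> \<in> W \<and> W \<subseteq> V) \<and>
             (\<forall>g\<in>carrier G. \<forall>v\<in>V. g \<otimes>\<^bsub>G\<^esub> v \<otimes>\<^bsub>G\<^esub> inv\<^bsub>G\<^esub> g \<in> V)))"

definition group_entourage :: "('g, 'm) monoid_scheme \<Rightarrow> 'g set \<Rightarrow> ('g \<times> 'g) set" where
  "group_entourage G V =
     {(h, g). h \<in> carrier G \<and> g \<in> carrier G \<and> h \<otimes>\<^bsub>G\<^esub> inv\<^bsub>G\<^esub> g \<in> V}"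

definition local_trivialization ::
  "('g, 'm) monoid_scheme \<Rightarrow> 'g topology \<Rightarrow> 'e topology \<Rightarrow> 'x topology \<Rightarrow>
   ('e \<Rightarrow> 'x) \<Rightarrow> ('e \<Rightarrow> 'g \<Rightarrow> 'e) \<Rightarrow> 'x set \<Rightarrow> ('e \<Rightarrow> 'x \<times> 'g) \<Rightarrow> bool" where
  "local_trivialization G TG E X p act U \<phi> \<longleftrightarrow>
     openin X U \<and>
     homeomorphic_map (subtopology E {e \<in> topspace E. p e \<in> U})
                      (prod_topology (subtopology X U) TG) \<phi> \<and>
     (\<forall>e\<in>topspace E. p e \<in> U \<longrightarrow> fst (\<phi> e) = p e) \<and>
     (\<forall>e\<in>topspace E. \<forall>g\<in>carrier G. p e \<in> U \<longrightarrow>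
        \<phi> (act e g) = (p e, snd (\<phi> e) \<otimes>\<^bsub>G\<^esub> g))"

text \<open>A numerable principal G-bundle p : E \<rightarrow> X with right action act, where the
  numerability is witnessed by the locally finite partition of unity (u j) for j in J
  whose positivity sets u j^{-1}(0,1] are trivialising.\<close>
definition numerable_principal_bundle ::
  "('g, 'm) monoid_scheme \<Rightarrow> 'g topology \<Rightarrow> 'e topology \<Rightarrow> 'x topology \<Rightarrow>
   ('e \<Rightarrow> 'x) \<Rightarrow> ('e \<Rightarrow> 'g \<Rightarrow> 'e) \<Rightarrow> 'j set \<Rightarrow> ('j \<Rightarrow> 'x \<Rightarrow> real) \<Rightarrow> bool" where
  "numerable_principal_bundle G TG E X p act J u \<longleftrightarrow>
     topological_group G TG \<and>
     continuous_map E X p \<and>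
     continuous_map (prod_topology E TG) E (\<lambda>(e, g). act e g) \<and>
     (\<forall>e\<in>topspace E. act e \<one>\<^bsub>G\<^esub> = e) \<and>
     (\<forall>e\<in>topspace E. \<forall>g\<in>carrier G. \<forall>h\<in>carrier G.
        act (act e g) h = act e (g \<otimes>\<^bsub>G\<^esub> h)) \<and>
     (\<forall>e\<in>topspace E. \<forall>g\<in>carrier G. p (act e g) = p e) \<and>
     \<comment> \<open>partition of unity\<close>
     (\<forall>j\<in>J. continuous_map X euclideanreal (u j) \<and>
              (\<forall>x\<in>topspace X. 0 \<le> u j x \<and> u j x \<le> 1)) \<and>
     (\<forall>x\<in>topspace X. \<exists>N. openin X N \<and> x \<in> N \<and>
              finite {j\<in>J. \<exists>y\<in>N. u j y \<noteq> 0}) \<and>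
     (\<forall>x\<in>topspace X. (\<Sum>j\<in>{j\<in>J. u j x \<noteq> 0}. u j x) = 1) \<and>
     \<comment> \<open>subordinate to a trivialising cover\<close>
     (\<forall>j\<in>J. \<exists>\<phi>. local_trivialization G TG E X p act {x\<in>topspace X. u j x > 0} \<phi>)"

definition bundle_gamma :: "('g, 'm) monoid_scheme \<Rightarrow> ('e \<Rightarrow> 'g \<Rightarrow> 'e) \<Rightarrow> 'e \<Rightarrow> 'e \<Rightarrow> 'g" where
  "bundle_gamma G act y z = (THE g. g \<in> carrier G \<and> y = act z g)"

definition gauge_group ::
  "('g, 'm) monoid_scheme \<Rightarrow> 'e topology \<Rightarrow> ('e \<Rightarrow> 'x) \<Rightarrow> ('e \<Rightarrow> 'g \<Rightarrow> 'e) \<Rightarrow> ('e \<Rightarrow> 'e) set" where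
  "gauge_group G E p act =
     {f. homeomorphic_map E E f \<and>
          (\<forall>e\<in>topspace E. \<forall>g\<in>carrier G. f (act e g) = act (f e) g) \<and>
          (\<forall>e\<in>topspace E. p (f e) = p e)}"

definition gauge_entourage ::
  "('g, 'm) monoid_scheme \<Rightarrow> 'e topology \<Rightarrow> ('e \<Rightarrow> 'x) \<Rightarrow> ('e \<Rightarrow> 'g \<Rightarrow> 'e) \<Rightarrow>
   'x set \<Rightarrow> 'g set \<Rightarrow> (('e \<Rightarrow> 'e) \<times> ('e \<Rightarrow> 'e)) set" where
  "gauge_entourage G E p act K V =
     {(f, h). f \<in> gauge_group G E p act \<and> h \<in> gauge_group G E p act \<and>
        (\<forall>z\<in>topspace E. p z \<in> K \<longrightarrow> bundle_gamma G act (f z) (h z) \<in> V)}"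

definition gauge_res :: "('g, 'm) monoid_scheme \<Rightarrow> ('e \<Rightarrow> 'g \<Rightarrow> 'e) \<Rightarrow> 'e \<Rightarrow> ('e \<Rightarrow> 'e) \<Rightarrow> 'g" where
  "gauge_res G act e0 f = bundle_gamma G act (f e0) e0"

text \<open>Uniform continuity of res with respect to the uniform structures generated by the
  fundamental entourages (both families are filter bases).\<close>
definition gauge_res_uniformly_continuous ::
  "('g, 'm) monoid_scheme \<Rightarrow> 'g topology \<Rightarrow> 'e topology \<Rightarrow> 'x topology \<Rightarrow>
   ('e \<Rightarrow> 'x) \<Rightarrow> ('e \<Rightarrow> 'g \<Rightarrow> 'e) \<Rightarrow> 'e \<Rightarrow> bool" where
  "gauge_res_uniformly_continuous G TG E X p act e0 \<longleftrightarrow>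
     (\<forall>V\<in>sym_nhds_one G TG. \<exists>K W. compactin X K \<and> W \<in> sym_nhds_one G TG \<and>
        gauge_entourage G E p act K W \<subseteq>
          {(f, h). (gauge_res G act e0 f, gauge_res G act e0 h) \<in> group_entourage G V})"

end

theory Submission
  imports Defs
begin

text \<open>
  Both claims only involve the fibre over the base point. If \<open>\<chi>(e0) = e0 \<cdot> a\<close> and
  \<open>\<chi>'(e0) = e0 \<cdot> b\<close>, then \<open>\<gamma>(\<chi>(e0), \<chi>'(e0)) = b\<inverse>a\<close>, so the entourage \<open>O({*}, W)\<close> controls
  \<open>b\<inverse>a\<close>; in a SIN group a conjugation-invariant neighbourhood turns this into control of
  \<open>ab\<inverse> = b (b\<inverse>a) b\<inverse>\<close>.

  For surjectivity, take a trivialisation \<open>\<phi>\<close> over \<open>U = {u\<^sub>j > 0}\<close> containing \<open>*\<close>. A path from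
  \<open>1\<close> to a conjugate of \<open>g\<close>, reparametrised by \<open>u\<^sub>j\<close>, gives \<open>\<Gamma> : X \<rightarrow> G\<close> which is \<open>1\<close> where
  \<open>u\<^sub>j \<le> u\<^sub>j(*)/2\<close>. Then \<open>\<psi>(e) = \<phi>\<^sub>2(e)\<inverse> \<Gamma>(p e) \<phi>\<^sub>2(e)\<close> over \<open>U\<close> and \<open>\<psi> = 1\<close> elsewhere is
  continuous and satisfies \<open>\<psi>(e k) = k\<inverse> \<psi>(e) k\<close>, which is exactly what makes
  \<open>e \<mapsto> e \<cdot> \<psi>(e)\<close> a gauge transformation; its value at \<open>e0\<close> is \<open>g\<close>.
\<close>

lemma continuous_map_group_mult:
  assumes "topological_group G TG" "continuous_map Z TG f" "continuous_map Z TG g"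
  shows "continuous_map Z TG (\<lambda>z. f z \<otimes>\<^bsub>G\<^esub> g z)"
proof -
  have "continuous_map Z (prod_topology TG TG) (\<lambda>z. (f z, g z))"
    using assms by (simp add: continuous_map_paired)
  moreover have "continuous_map (prod_topology TG TG) TG (\<lambda>(a, b). a \<otimes>\<^bsub>G\<^esub> b)"
    using assms(1) by (simp add: topological_group_def)
  ultimately show ?thesis
    using continuous_map_compose[of Z _ "\<lambda>z. (f z, g z)" TG "\<lambda>(a, b). a \<otimes>\<^bsub>G\<^esub> b"]
    by (simp add: o_def)
qed

lemma continuous_map_group_inv:
  assumes "topological_group G TG" "continuous_map Z TG f"
  shows "continuous_map Z TG (\<lambda>z. inv\<^bsub>G\<^esub> f z)"
  using assms continuous_map_compose[OF assms(2)]
  by (auto simp: topological_group_def o_def)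

lemma sym_nhds_one_subset:
  assumes "topological_group G TG" "openin TG W" "\<one>\<^bsub>G\<^esub> \<in> W"
  shows "\<exists>V\<in>sym_nhds_one G TG. V \<subseteq> W"
proof
  interpret G: group G
    using assms(1) by (simp add: topological_group_def)
  have inv_cont: "continuous_map TG TG (\<lambda>a. inv\<^bsub>G\<^esub> a)" and carrier: "topspace TG = carrier G"
    using assms(1) by (auto simp: topological_group_def)
  let ?V = "W \<inter> {a \<in> topspace TG. inv\<^bsub>G\<^esub> a \<in> W}"
  have "openin TG ?V"
    using openin_continuous_map_preimage[OF inv_cont assms(2)] assms(2) by (intro openin_Int)
  moreover have "W \<subseteq> carrier G"
    using openin_subset[OF assms(2)] carrier by simp
  ultimately show "?V \<in> sym_nhds_one G TG"
    using assms(3) carrier by (auto simp: sym_nhds_one_def)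
qed blast

lemma SIN_swap_nhds:
  assumes "topological_group G TG" "SIN G TG" "openin TG V" "\<one>\<^bsub>G\<^esub> \<in> V"
  obtains W where "W \<in> sym_nhds_one G TG"
    "\<And>a b. \<lbrakk>a \<in> carrier G; b \<in> carrier G; inv\<^bsub>G\<^esub> b \<otimes>\<^bsub>G\<^esub> a \<in> W\<rbrakk> \<Longrightarrow> a \<otimes>\<^bsub>G\<^esub> inv\<^bsub>G\<^esub> b \<in> V"
proof -
  interpret G: group G
    using assms(1) by (simp add: topological_group_def)
  obtain V' W' where V': "V' \<subseteq> V" "openin TG W'" "\<one>\<^bsub>G\<^esub> \<in> W'" "W' \<subseteq> V'"
    and conj: "\<And>g v. \<lbrakk>g \<in> carrier G; v \<in> V'\<rbrakk> \<Longrightarrow> g \<otimes>\<^bsub>G\<^esub> v \<otimes>\<^bsub>G\<^esub> inv\<^bsub>G\<^esub> g \<in> V'"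
    using assms(2-4) unfolding SIN_def by meson
  obtain W where W: "W \<in> sym_nhds_one G TG" "W \<subseteq> W'"
    using sym_nhds_one_subset[OF assms(1) V'(2,3)] by blast
  show thesis
  proof (rule that[OF W(1)])
    fix a b
    assume ab: "a \<in> carrier G" "b \<in> carrier G" "inv\<^bsub>G\<^esub> b \<otimes>\<^bsub>G\<^esub> a \<in> W"
    then have "b \<otimes>\<^bsub>G\<^esub> (inv\<^bsub>G\<^esub> b \<otimes>\<^bsub>G\<^esub> a) \<otimes>\<^bsub>G\<^esub> inv\<^bsub>G\<^esub> b \<in> V'"
      using W(2) V'(4) by (intro conj) auto
    then show "a \<otimes>\<^bsub>G\<^esub> inv\<^bsub>G\<^esub> b \<in> V"
      using ab(1,2) V'(1) by (auto simp flip: G.m_assoc)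
  qed
qed

lemma continuous_map_if_openin:
  assumes "openin X S" "openin X T" "topspace X \<subseteq> S \<union> T"
    and "continuous_map (subtopology X S) Y f" "continuous_map (subtopology X T) Y g"
    and "\<And>x. x \<in> S \<Longrightarrow> x \<in> T \<Longrightarrow> f x = g x"
  shows "continuous_map X Y (\<lambda>x. if x \<in> S then f x else g x)"
  by (rule pasting_lemma[where I = "{True, False}" and T = "\<lambda>b. if b then S else T"
        and f = "\<lambda>b. if b then f else g"]) (use assms in auto)

lemma path_connected_bump:
  assumes "path_connected_space T" "a \<in> topspace T" "b \<in> topspace T"
    and "continuous_map X euclideanreal v" "0 < v x0"
  obtains \<Gamma> where "continuous_map X T \<Gamma>" "\<Gamma> x0 = b" "\<And>x. v x \<le> v x0 / 2 \<Longrightarrow> \<Gamma> x = a"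
proof -
  obtain \<gamma> where \<gamma>: "pathin T \<gamma>" "\<gamma> 0 = a" "\<gamma> 1 = b"
    using assms(1-3) unfolding path_connected_space_def by blast
  define s where "s x = max 0 (min 1 (2 * v x / v x0 - 1))" for x
  have "continuous_map X (top_of_set {0..1}) s"
    unfolding continuous_map_in_subtopology s_def using assms(4,5)
    by (auto intro!: continuous_intros)
  then have "continuous_map X T (\<gamma> \<circ> s)"
    using \<gamma>(1) continuous_map_compose pathin_def by blast
  moreover have "(\<gamma> \<circ> s) x0 = b"
    using assms(5) \<gamma>(3) by (simp add: s_def)
  moreover have "(\<gamma> \<circ> s) x = a" if "v x \<le> v x0 / 2" for x
  proof -
    have "2 * v x / v x0 \<le> 1"
      using that assms(5) by (simp add: field_simps)
    then show ?thesis
      using \<gamma>(2) by (simp add: s_def)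
  qed
  ultimately show thesis
    using that by blast
qed

locale principal_bundle =
  fixes G :: "('g, 'm) monoid_scheme" and TG :: "'g topology"
    and E :: "'e topology" and X :: "'x topology"
    and p :: "'e \<Rightarrow> 'x" and act :: "'e \<Rightarrow> 'g \<Rightarrow> 'e"
    and J :: "'j set" and u :: "'j \<Rightarrow> 'x \<Rightarrow> real"
  assumes numerable: "numerable_principal_bundle G TG E X p act J u"
begin

lemma topological_group: "topological_group G TG"
  using numerable by (simp add: numerable_principal_bundle_def)

sublocale G: group G
  using topological_group by (simp add: topological_group_def)

lemma topspace_group [simp]: "topspace TG = carrier G"
  using topological_group by (simp add: topological_group_def)

lemma continuous_map_p: "continuous_map E X p"
  using numerable by (simp add: numerable_principal_bundle_def)

lemma continuous_map_act: "continuous_map (prod_topology E TG) E (\<lambda>(e, g). act e g)"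
  using numerable by (simp add: numerable_principal_bundle_def)

lemma act_one [simp]: "e \<in> topspace E \<Longrightarrow> act e \<one>\<^bsub>G\<^esub> = e"
  using numerable by (simp add: numerable_principal_bundle_def)

lemma act_act:
  "\<lbrakk>e \<in> topspace E; g \<in> carrier G; h \<in> carrier G\<rbrakk> \<Longrightarrow> act (act e g) h = act e (g \<otimes>\<^bsub>G\<^esub> h)"
  using numerable by (simp add: numerable_principal_bundle_def)

lemma p_act [simp]: "\<lbrakk>e \<in> topspace E; g \<in> carrier G\<rbrakk> \<Longrightarrow> p (act e g) = p e"
  using numerable by (simp add: numerable_principal_bundle_def)

lemma act_in_topspace [simp]: "\<lbrakk>e \<in> topspace E; g \<in> carrier G\<rbrakk> \<Longrightarrow> act e g \<in> topspace E"
  using continuous_map_image_subset_topspace[OF continuous_map_act] by force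

lemma p_in_topspace [simp]: "e \<in> topspace E \<Longrightarrow> p e \<in> topspace X"
  using continuous_map_image_subset_topspace[OF continuous_map_p] by auto

lemma continuous_map_act_by:
  assumes "continuous_map E TG f"
  shows "continuous_map E E (\<lambda>e. act e (f e))"
proof -
  have "continuous_map E (prod_topology E TG) (\<lambda>e. (e, f e))"
    using assms by (simp add: continuous_map_paired)
  from continuous_map_compose[OF this continuous_map_act] show ?thesis
    by (simp add: o_def)
qed

lemma continuous_map_partition: "j \<in> J \<Longrightarrow> continuous_map X euclideanreal (u j)"
  using numerable by (simp add: numerable_principal_bundle_def)

lemma partition_nonneg: "\<lbrakk>j \<in> J; x \<in> topspace X\<rbrakk> \<Longrightarrow> 0 \<le> u j x"
  using numerable by (simp add: numerable_principal_bundle_def)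

lemma partition_positive_somewhere:
  assumes "x \<in> topspace X"
  obtains j where "j \<in> J" "0 < u j x"
proof -
  have "(\<Sum>j\<in>{j\<in>J. u j x \<noteq> 0}. u j x) = 1"
    using numerable assms by (simp add: numerable_principal_bundle_def)
  then have "{j\<in>J. u j x \<noteq> 0} \<noteq> {}"
    by force
  then obtain j where "j \<in> J" "u j x \<noteq> 0"
    by blast
  then show thesis
    using that partition_nonneg[OF _ assms] by force
qed

lemma trivialization_over_partition:
  "j \<in> J \<Longrightarrow> \<exists>\<phi>. local_trivialization G TG E X p act {x \<in> topspace X. 0 < u j x} \<phi>"
  using numerable by (simp add: numerable_principal_bundle_def)

end

locale trivialized_bundle = principal_bundle +
  fixes U :: "'x set" and \<phi> :: "'e \<Rightarrow> 'x \<times> 'g"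
  assumes trivialization: "local_trivialization G TG E X p act U \<phi>"
begin

abbreviation E\<^sub>U :: "'e set" where
  "E\<^sub>U \<equiv> {e \<in> topspace E. p e \<in> U}"

lemma openin_base: "openin X U"
  using trivialization by (simp add: local_trivialization_def)

lemma openin_restriction: "openin E E\<^sub>U"
  using openin_continuous_map_preimage[OF continuous_map_p openin_base] .

lemma homeomorphic_map_trivialization:
  "homeomorphic_map (subtopology E E\<^sub>U) (prod_topology (subtopology X U) TG) \<phi>"
  using trivialization by (simp add: local_trivialization_def)

lemma fst_trivialization: "\<lbrakk>e \<in> topspace E; p e \<in> U\<rbrakk> \<Longrightarrow> fst (\<phi> e) = p e"
  using trivialization by (simp add: local_trivialization_def)

lemma trivialization_act:
  "\<lbrakk>e \<in> topspace E; g \<in> carrier G; p e \<in> U\<rbrakk> \<Longrightarrow> \<phi> (act e g) = (p e, snd (\<phi> e) \<otimes>\<^bsub>G\<^esub> g)"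
  using trivialization by (simp add: local_trivialization_def)

lemma continuous_map_snd_trivialization:
  "continuous_map (subtopology E E\<^sub>U) TG (\<lambda>e. snd (\<phi> e))"
  using continuous_map_compose[OF homeomorphic_imp_continuous_map[OF homeomorphic_map_trivialization]
      continuous_map_snd] by (simp add: o_def)

lemma snd_trivialization_in_carrier [simp]:
  "\<lbrakk>e \<in> topspace E; p e \<in> U\<rbrakk> \<Longrightarrow> snd (\<phi> e) \<in> carrier G"
  using continuous_map_image_subset_topspace[OF continuous_map_snd_trivialization] by force

lemma inj_on_trivialization: "inj_on \<phi> E\<^sub>U"
proof -
  have "topspace E \<inter> E\<^sub>U = E\<^sub>U"
    by blast
  then show ?thesis
    using homeomorphic_imp_injective_map[OF homeomorphic_map_trivialization] by simp
qed

lemma act_free_over: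
  assumes "e \<in> topspace E" "p e \<in> U" "g \<in> carrier G" "h \<in> carrier G" "act e g = act e h"
  shows "g = h"
proof -
  have "(p e, snd (\<phi> e) \<otimes>\<^bsub>G\<^esub> g) = (p e, snd (\<phi> e) \<otimes>\<^bsub>G\<^esub> h)"
    using trivialization_act[OF assms(1,3,2)] trivialization_act[OF assms(1,4,2)] assms(5)
    by metis
  then show ?thesis
    using assms by simp
qed

lemma fibre_orbit_over:
  assumes e: "e \<in> topspace E" "p e \<in> U" and e': "e' \<in> topspace E" "p e' = p e"
  obtains g where "g \<in> carrier G" "e' = act e g"
proof
  define g where "g = inv\<^bsub>G\<^esub> snd (\<phi> e) \<otimes>\<^bsub>G\<^esub> snd (\<phi> e')"
  show g: "g \<in> carrier G"
    using e e' by (simp add: g_def)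
  have "\<phi> (act e g) = (p e, snd (\<phi> e) \<otimes>\<^bsub>G\<^esub> g)"
    using e g by (simp add: trivialization_act)
  also have "\<dots> = \<phi> e'"
    using e e' fst_trivialization[of e'] by (simp add: g_def prod_eq_iff flip: G.m_assoc)
  finally show "e' = act e g"
    using inj_on_trivialization e e' g by (auto dest: inj_onD)
qed

definition conj_twist :: "('x \<Rightarrow> 'g) \<Rightarrow> 'e \<Rightarrow> 'g" where
  "conj_twist \<Gamma> e =
     (if p e \<in> U then inv\<^bsub>G\<^esub> snd (\<phi> e) \<otimes>\<^bsub>G\<^esub> \<Gamma> (p e) \<otimes>\<^bsub>G\<^esub> snd (\<phi> e) else \<one>\<^bsub>G\<^esub>)"

lemma conj_twist_act:
  assumes "continuous_map X TG \<Gamma>" "e \<in> topspace E" "k \<in> carrier G"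
  shows "conj_twist \<Gamma> (act e k) = inv\<^bsub>G\<^esub> k \<otimes>\<^bsub>G\<^esub> conj_twist \<Gamma> e \<otimes>\<^bsub>G\<^esub> k"
proof (cases "p e \<in> U")
  case True
  have "\<Gamma> (p e) \<in> carrier G"
    using continuous_map_image_subset_topspace[OF assms(1)] assms(2) by force
  then show ?thesis
    using True assms by (simp add: conj_twist_def trivialization_act G.inv_mult_group G.m_assoc)
qed (use assms in \<open>simp add: conj_twist_def\<close>)

lemma continuous_map_conj_twist:
  assumes \<Gamma>: "continuous_map X TG \<Gamma>"
    and T: "openin X T" "topspace X \<subseteq> U \<union> T" "\<And>x. x \<in> T \<Longrightarrow> \<Gamma> x = \<one>\<^bsub>G\<^esub>"
  shows "continuous_map E TG (conj_twist \<Gamma>)"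
proof -
  let ?f = "\<lambda>e. inv\<^bsub>G\<^esub> snd (\<phi> e) \<otimes>\<^bsub>G\<^esub> \<Gamma> (p e) \<otimes>\<^bsub>G\<^esub> snd (\<phi> e)"
  let ?E\<^sub>T = "{e \<in> topspace E. p e \<in> T}"
  have "continuous_map (subtopology E E\<^sub>U) TG (\<lambda>e. \<Gamma> (p e))"
    using continuous_map_compose[OF continuous_map_from_subtopology[OF continuous_map_p] \<Gamma>]
    by (simp add: o_def)
  then have "continuous_map (subtopology E E\<^sub>U) TG ?f"
    using continuous_map_snd_trivialization
    by (intro continuous_map_group_mult[OF topological_group] continuous_map_group_inv[OF topological_group])
  moreover have "openin E ?E\<^sub>T"
    using openin_continuous_map_preimage[OF continuous_map_p T(1)] .
  ultimately have "continuous_map E TG (\<lambda>e. if e \<in> E\<^sub>U then ?f e else \<one>\<^bsub>G\<^esub>)"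
  proof (intro continuous_map_if_openin[OF openin_restriction])
    show "topspace E \<subseteq> E\<^sub>U \<union> ?E\<^sub>T"
      using T(2) p_in_topspace by blast
    show "?f e = \<one>\<^bsub>G\<^esub>" if "e \<in> E\<^sub>U" "e \<in> ?E\<^sub>T" for e
      using that T(3) by simp
  qed simp_all
  then show ?thesis
    by (rule continuous_map_eq) (simp add: conj_twist_def)
qed

end

context principal_bundle
begin

lemma trivialized_bundle_at:
  assumes "x \<in> topspace X"
  obtains U \<phi> where "x \<in> U" "trivialized_bundle G TG E X p act J u U \<phi>"
proof -
  obtain j where j: "j \<in> J" "0 < u j x"
    using partition_positive_somewhere[OF assms] .
  then obtain \<phi> where "local_trivialization G TG E X p act {x \<in> topspace X. 0 < u j x} \<phi>"
    using trivialization_over_partition by blast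
  then have "trivialized_bundle G TG E X p act J u {x \<in> topspace X. 0 < u j x} \<phi>"
    by (intro trivialized_bundle.intro principal_bundle_axioms trivialized_bundle_axioms.intro)
  moreover have "x \<in> {x \<in> topspace X. 0 < u j x}"
    using j assms by simp
  ultimately show thesis
    by (rule that[rotated])
qed

lemma act_free:
  assumes "e \<in> topspace E" "g \<in> carrier G" "h \<in> carrier G" "act e g = act e h"
  shows "g = h"
proof -
  obtain U \<phi> where "p e \<in> U" and "trivialized_bundle G TG E X p act J u U \<phi>"
    using trivialized_bundle_at assms(1) p_in_topspace by blast
  then interpret T: trivialized_bundle G TG E X p act J u U \<phi>
    by simp
  show ?thesis
    using T.act_free_over \<open>p e \<in> U\<close> assms by blast
qed

lemma fibre_orbit:
  assumes "e \<in> topspace E" "e' \<in> topspace E" "p e' = p e"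
  obtains g where "g \<in> carrier G" "e' = act e g"
proof -
  obtain U \<phi> where "p e \<in> U" and "trivialized_bundle G TG E X p act J u U \<phi>"
    using trivialized_bundle_at assms(1) p_in_topspace by blast
  then interpret T: trivialized_bundle G TG E X p act J u U \<phi>
    by simp
  show thesis
    using T.fibre_orbit_over \<open>p e \<in> U\<close> assms that by blast
qed

lemma bundle_gamma_act:
  "\<lbrakk>e \<in> topspace E; g \<in> carrier G\<rbrakk> \<Longrightarrow> bundle_gamma G act (act e g) e = g"
  unfolding bundle_gamma_def by (rule the_equality) (auto dest: act_free)

lemma gauge_group_fibre:
  assumes "f \<in> gauge_group G E p act" "e \<in> topspace E"
  shows "f e \<in> topspace E" "p (f e) = p e"
  using assms homeomorphic_imp_surjective_map by (fastforce simp: gauge_group_def)+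

lemma gauge_res_act:
  assumes "f \<in> gauge_group G E p act" "e \<in> topspace E"
  shows "gauge_res G act e f \<in> carrier G" "f e = act e (gauge_res G act e f)"
proof -
  obtain g where "g \<in> carrier G" "f e = act e g"
    using fibre_orbit[OF assms(2) gauge_group_fibre[OF assms]] .
  moreover have "gauge_res G act e f = g"
    using calculation assms(2) by (simp add: gauge_res_def bundle_gamma_act)
  ultimately show "gauge_res G act e f \<in> carrier G" "f e = act e (gauge_res G act e f)"
    by simp_all
qed

lemma bundle_gamma_gauge:
  assumes "f \<in> gauge_group G E p act" "h \<in> gauge_group G E p act" "e \<in> topspace E"
  shows "bundle_gamma G act (f e) (h e) = inv\<^bsub>G\<^esub> gauge_res G act e h \<otimes>\<^bsub>G\<^esub> gauge_res G act e f"
proof -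
  define a b where "a = gauge_res G act e f" and "b = gauge_res G act e h"
  have ab: "a \<in> carrier G" "b \<in> carrier G" "f e = act e a" "h e = act e b"
    using gauge_res_act assms by (simp_all add: a_def b_def)
  then have "f e = act (act e b) (inv\<^bsub>G\<^esub> b \<otimes>\<^bsub>G\<^esub> a)"
    using assms(3) by (simp add: act_act flip: G.m_assoc)
  then show ?thesis
    using ab assms(3) by (simp add: bundle_gamma_act flip: a_def b_def)
qed

lemma SIN_imp_gauge_res_uniformly_continuous:
  assumes "SIN G TG" "e0 \<in> topspace E"
  shows "gauge_res_uniformly_continuous G TG E X p act e0"
  unfolding gauge_res_uniformly_continuous_def
proof
  fix V
  assume "V \<in> sym_nhds_one G TG"
  then obtain W where W: "W \<in> sym_nhds_one G TG"
    and swap: "\<And>a b. \<lbrakk>a \<in> carrier G; b \<in> carrier G; inv\<^bsub>G\<^esub> b \<otimes>\<^bsub>G\<^esub> a \<in> W\<rbrakk> \<Longrightarrow> a \<otimes>\<^bsub>G\<^esub> inv\<^bsub>G\<^esub> b \<in> V"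
    using SIN_swap_nhds[OF topological_group assms(1)] by (auto simp: sym_nhds_one_def)
  have "gauge_entourage G E p act {p e0} W \<subseteq>
      {(f, h). (gauge_res G act e0 f, gauge_res G act e0 h) \<in> group_entourage G V}"
  proof clarify
    fix f h
    assume "(f, h) \<in> gauge_entourage G E p act {p e0} W"
    then have "f \<in> gauge_group G E p act" "h \<in> gauge_group G E p act"
      and "bundle_gamma G act (f e0) (h e0) \<in> W"
      using assms(2) by (auto simp: gauge_entourage_def)
    then show "(gauge_res G act e0 f, gauge_res G act e0 h) \<in> group_entourage G V"
      using assms(2) swap gauge_res_act by (simp add: group_entourage_def bundle_gamma_gauge)
  qed
  then show "\<exists>K W. compactin X K \<and> W \<in> sym_nhds_one G TG \<and> gauge_entourage G E p act K W \<subseteq>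
      {(f, h). (gauge_res G act e0 f, gauge_res G act e0 h) \<in> group_entourage G V}"
    using W assms(2) by (intro exI[of _ "{p e0}"] exI[of _ W]) simp
qed

lemma conj_equivariant_act_in_gauge_group:
  assumes \<psi>: "continuous_map E TG \<psi>"
    and equivariant: "\<And>e k. \<lbrakk>e \<in> topspace E; k \<in> carrier G\<rbrakk> \<Longrightarrow>
      \<psi> (act e k) = inv\<^bsub>G\<^esub> k \<otimes>\<^bsub>G\<^esub> \<psi> e \<otimes>\<^bsub>G\<^esub> k"
  shows "(\<lambda>e. act e (\<psi> e)) \<in> gauge_group G E p act"
proof -
  have \<psi>_carrier: "\<psi> e \<in> carrier G" if "e \<in> topspace E" for e
    using continuous_map_image_subset_topspace[OF \<psi>] that by auto
  have \<psi>_act: "\<psi> (act e (\<psi> e)) = \<psi> e" "\<psi> (act e (inv\<^bsub>G\<^esub> \<psi> e)) = \<psi> e"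
    if "e \<in> topspace E" for e
    using equivariant \<psi>_carrier that by (simp flip: G.m_assoc, simp add: G.m_assoc)
  have "homeomorphic_maps E E (\<lambda>e. act e (\<psi> e)) (\<lambda>e. act e (inv\<^bsub>G\<^esub> \<psi> e))"
    unfolding homeomorphic_maps_def
    using continuous_map_act_by \<psi> continuous_map_group_inv[OF topological_group \<psi>]
      \<psi>_act \<psi>_carrier by (simp add: act_act)
  moreover have "act (act e k) (\<psi> (act e k)) = act (act e (\<psi> e)) k"
    if "e \<in> topspace E" "k \<in> carrier G" for e k
  proof -
    have "k \<otimes>\<^bsub>G\<^esub> \<psi> (act e k) = \<psi> e \<otimes>\<^bsub>G\<^esub> k"
      using equivariant \<psi>_carrier that by (simp flip: G.m_assoc)
    then show ?thesis
      using \<psi>_carrier that by (simp add: act_act)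
  qed
  ultimately show ?thesis
    unfolding gauge_group_def homeomorphic_map_maps
    using \<psi>_carrier by auto
qed

lemma path_connected_imp_gauge_res_surjective:
  assumes "path_connected_space TG" "e0 \<in> topspace E" "g \<in> carrier G"
  obtains f where "f \<in> gauge_group G E p act" "gauge_res G act e0 f = g"
proof -
  obtain j where j: "j \<in> J" "0 < u j (p e0)"
    using partition_positive_somewhere[OF p_in_topspace[OF assms(2)]] .
  define U where "U = {x \<in> topspace X. 0 < u j x}"
  obtain \<phi> where "local_trivialization G TG E X p act U \<phi>"
    using trivialization_over_partition[OF j(1)] by (auto simp: U_def)
  then interpret T: trivialized_bundle G TG E X p act J u U \<phi>
    by (intro trivialized_bundle.intro principal_bundle_axioms trivialized_bundle_axioms.intro)
  define h0 where "h0 = snd (\<phi> e0)"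
  have e0: "p e0 \<in> U" "h0 \<in> carrier G"
    using j assms(2) by (simp_all add: U_def h0_def)
  have "\<one>\<^bsub>G\<^esub> \<in> topspace TG" "h0 \<otimes>\<^bsub>G\<^esub> g \<otimes>\<^bsub>G\<^esub> inv\<^bsub>G\<^esub> h0 \<in> topspace TG"
    using e0 assms(3) by simp_all
  then obtain \<Gamma> where \<Gamma>: "continuous_map X TG \<Gamma>" "\<Gamma> (p e0) = h0 \<otimes>\<^bsub>G\<^esub> g \<otimes>\<^bsub>G\<^esub> inv\<^bsub>G\<^esub> h0"
    and \<Gamma>_one: "\<And>x. u j x \<le> u j (p e0) / 2 \<Longrightarrow> \<Gamma> x = \<one>\<^bsub>G\<^esub>"
    using path_connected_bump[OF assms(1) _ _ continuous_map_partition[OF j(1)] j(2)] by blast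
  define T where "T = {x \<in> topspace X. u j x < u j (p e0) / 2}"
  have "openin X T"
    using openin_continuous_map_preimage[OF continuous_map_partition[OF j(1)], of "{..< u j (p e0) / 2}"]
    by (simp add: T_def)
  moreover have "topspace X \<subseteq> U \<union> T"
    using j partition_nonneg by (fastforce simp: U_def T_def)
  moreover have "\<Gamma> x = \<one>\<^bsub>G\<^esub>" if "x \<in> T" for x
    using that \<Gamma>_one by (simp add: T_def)
  ultimately have "continuous_map E TG (T.conj_twist \<Gamma>)"
    by (rule T.continuous_map_conj_twist[OF \<Gamma>(1)])
  then have "(\<lambda>e. act e (T.conj_twist \<Gamma> e)) \<in> gauge_group G E p act"
    using conj_equivariant_act_in_gauge_group T.conj_twist_act[OF \<Gamma>(1)] by blast
  moreover have "T.conj_twist \<Gamma> e0 = g"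
    using e0 assms(2,3) \<Gamma>(2) by (simp add: T.conj_twist_def G.m_assoc flip: h0_def, simp flip: G.m_assoc)
  ultimately show thesis
    using that assms(2,3) by (simp add: gauge_res_def bundle_gamma_act)
qed

end

theorem proposition3p2:
  fixes G :: "('g, 'm) monoid_scheme" and TG :: "'g topology"
    and E :: "'e topology" and X :: "'x topology"
    and p :: "'e \<Rightarrow> 'x" and act :: "'e \<Rightarrow> 'g \<Rightarrow> 'e"
    and J :: "'j set" and u :: "'j \<Rightarrow> 'x \<Rightarrow> real"
    and x0 :: 'x and e0 :: 'e
  assumes pb: "numerable_principal_bundle G TG E X p act J u"
    and base: "x0 \<in> topspace X"
    and pt: "e0 \<in> topspace E" "p e0 = x0"
  shows "(SIN G TG \<longrightarrow> gauge_res_uniformly_continuous G TG E X p act e0) \<and>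
         (path_connected_space TG \<longrightarrow>
            (\<forall>g\<in>carrier G. \<exists>f\<in>gauge_group G E p act. gauge_res G act e0 f = g))"
proof -
  interpret principal_bundle G TG E X p act J u
    using pb by (rule principal_bundle.intro)
  show ?thesis
    using SIN_imp_gauge_res_uniformly_continuous path_connected_imp_gauge_res_surjective pt(1)
    by metis
qed

end
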